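(* For an integer $n \ge 3$ let $$f_n(x) = \frac{x^n-1}{(1-e^{2\pi i/n}x)(1-e^{-2\pi i/n}x)} = \frac{x^n-1}{1-2\cos(2\pi/n)\,x + x^2},$$ which is a polynomial of degree $n-2$ whose zeros are the $n$-th roots of unity other than $e^{\pm 2\pi i/n}$. Let $b_0 = 2.3565\ldots$ be the unique real root of $4\pi^2 + 2b + b^2 - 2b e^{b} = 0$. Then there exist constants $C>0$ and $n_0$ such that for every $n \ge n_0$ the derivative $f_n'$ has a zero $z_n$ with $$\left| z_n - \left(1 - \frac{b_0}{n}\right)\right| \le \frac{C}{n^2}.$$ That is, $f_n'$ has a zero within $O(1/n^2)$ of $1 - b_0/n$. *)

theory Defs
  imports "HOL-Analysis.Analysis" "HOL-Computational_Algebra.Polynomial"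
begin

text \<open>The polynomial f_n(x) = (x^n - 1) / (1 - 2 cos(2 pi/n) x + x^2) over the complex numbers;
  the division is exact polynomial division (the denominator divides x^n - 1 for n >= 3).\<close>
definition fpoly :: "nat \<Rightarrow> complex poly" where
  "fpoly n = (monom 1 n - 1) div [:1, - complex_of_real (2 * cos (2 * pi / real n)), 1:]"

end

theory Submission
  imports Defs "HOL-Real_Asymp.Real_Asymp"
begin

text \<open>
  Write \<open>f\<^sub>n = (x\<^sup>n - 1) / Q\<^sub>n\<close>. Since \<open>Q\<^sub>n\<close> has no real zeros, the real zeros of \<open>f\<^sub>n'\<close> are
  those of the quotient-rule numerator \<open>N\<^sub>n = n x\<^sup>n\<^sup>-\<^sup>1 Q\<^sub>n - (x\<^sup>n - 1) Q\<^sub>n'\<close>. On the scale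
  \<open>x = 1 - b/n - c/n\<^sup>2\<close> one has \<open>n\<^sup>2 N\<^sub>n(x) = n G(b) + L(b) + G'(b) c + o(1)\<close> with
  \<open>G(b) = (b\<^sup>2 + 2b + 4\<pi>\<^sup>2) e\<^sup>-\<^sup>b - 2b\<close>. The defining equation of \<open>b\<^sub>0\<close> says exactly \<open>G(b\<^sub>0) = 0\<close>,
  and \<open>G'(b\<^sub>0) < 0\<close>; so for a large constant \<open>K\<close> the numerator \<open>N\<^sub>n\<close> changes sign between
  \<open>1 - b\<^sub>0/n \<mp> K/n\<^sup>2\<close> for all large \<open>n\<close>, and the intermediate value theorem gives the zero.
\<close>

lemma linear_factors_dvd_if_two_roots:
  fixes p :: "'a::idom poly"
  assumes "a \<noteq> b" "poly p a = 0" "poly p b = 0"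
  shows "[:-a, 1:] * [:-b, 1:] dvd p"
proof -
  from assms(2) have "[:-a, 1:] dvd p" by (simp add: dvd_iff_poly_eq_0)
  then obtain r where r: "p = [:-a, 1:] * r" by (elim dvdE)
  from assms(1,3) have "poly r b = 0" by (auto simp: r)
  then have "[:-b, 1:] dvd r" by (simp add: dvd_iff_poly_eq_0)
  then show ?thesis unfolding r by (rule mult_dvd_mono[OF dvd_refl])
qed

lemma cos_quadratic_eq_cis_factors:
  "[:1, - complex_of_real (2 * cos a), 1:] = [:- cis a, 1:] * [:- cis (- a), 1:]"
proof -
  have "cis a * cis (- a) = 1" by (simp add: cis_mult)
  moreover have "cis a + cis (- a) = complex_of_real (2 * cos a)" by (simp add: complex_eq_iff)
  ultimately show ?thesis by (simp add: algebra_simps)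
qed

lemma fpoly_mult_denominator:
  assumes "n \<ge> 3"
  shows "fpoly n * [:1, - complex_of_real (2 * cos (2 * pi / real n)), 1:] = monom 1 n - 1"
proof -
  define a where "a = 2 * pi / real n"
  have "0 < a" "a < pi" "real n * a = 2 * pi" using assms by (auto simp: a_def field_simps)
  then have "Im (cis a) \<noteq> Im (cis (- a))" using sin_gt_zero[of a] by simp
  then have "cis a \<noteq> cis (- a)" by metis
  moreover have "cis a ^ n = 1" by (simp add: Complex.DeMoivre \<open>real n * a = 2 * pi\<close>)
  moreover have "cis (- a) ^ n = 1"
    using Complex.DeMoivre[of "- a" n] \<open>real n * a = 2 * pi\<close> by (simp add: complex_eq_iff)
  ultimately have "[:1, - complex_of_real (2 * cos a), 1:] dvd monom 1 n - 1"
    unfolding cos_quadratic_eq_cis_factors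
    by (intro linear_factors_dvd_if_two_roots) (simp_all add: poly_monom)
  then show ?thesis unfolding fpoly_def a_def by (rule dvd_div_mult_self)
qed

lemma pderiv_mult_square_if_mult_eq:
  fixes p q r :: "'a::idom poly"
  assumes "p * q = r"
  shows "pderiv p * q\<^sup>2 = pderiv r * q - r * pderiv q"
  using assms[symmetric] by (simp add: pderiv_mult power2_eq_square algebra_simps)

lemma cos_quadratic_pos:
  fixes c x :: real
  assumes "\<bar>c\<bar> < 1"
  shows "0 < 1 - 2 * c * x + x\<^sup>2"
proof -
  have "c\<^sup>2 < 1" using assms by (simp add: abs_square_less_1)
  moreover have "1 - 2 * c * x + x\<^sup>2 = (x - c)\<^sup>2 + (1 - c\<^sup>2)" by (simp add: power2_eq_square algebra_simps)
  ultimately show ?thesis using zero_le_power2[of "x - c"] by linarith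
qed

definition crit_numerator :: "nat \<Rightarrow> real \<Rightarrow> real" where
  "crit_numerator n x = real n * x ^ (n - 1) * (1 - 2 * cos (2 * pi / real n) * x + x\<^sup>2)
     - (x ^ n - 1) * (2 * x - 2 * cos (2 * pi / real n))"

lemma poly_pderiv_fpoly_eq_0_if_crit_numerator_eq_0:
  assumes "n \<ge> 3" "crit_numerator n x = 0"
  shows "poly (pderiv (fpoly n)) (complex_of_real x) = 0"
proof -
  define c where "c = cos (2 * pi / real n)"
  define Q where "Q = [:1, - complex_of_real (2 * c), 1:]"
  define z where "z = complex_of_real x"
  have "0 < 2 * pi / real n" "2 * pi / real n < pi" using assms(1) by (auto simp: field_simps)
  then have "cos pi < c" "c < cos 0"
    unfolding c_def using cos_monotone_0_pi[of "2 * pi / real n" pi] cos_monotone_0_pi[of 0] by auto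
  then have "\<bar>c\<bar> < 1" by simp
  have Qz: "poly Q z = complex_of_real (1 - 2 * c * x + x\<^sup>2)"
    by (simp add: Q_def z_def power2_eq_square algebra_simps)
  have dQz: "poly (pderiv Q) z = complex_of_real (2 * x - 2 * c)"
    by (simp add: Q_def z_def pderiv_pCons)
  have dmonom: "poly (pderiv (monom 1 n - 1)) z = of_nat n * z ^ (n - 1)"
    by (simp add: pderiv_diff pderiv_monom poly_monom)
  have "pderiv (fpoly n) * Q\<^sup>2 = pderiv (monom 1 n - 1) * Q - (monom 1 n - 1) * pderiv Q"
    using fpoly_mult_denominator[OF assms(1)] by (intro pderiv_mult_square_if_mult_eq) (simp add: Q_def c_def)
  from arg_cong[OF this, of "\<lambda>p. poly p z"]
  have "poly (pderiv (fpoly n)) z * (poly Q z)\<^sup>2 = complex_of_real (crit_numerator n x)"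
    unfolding poly_diff poly_mult poly_power poly_1 poly_monom mult_1_left dmonom Qz dQz
    unfolding crit_numerator_def z_def c_def
    by (simp only: of_real_mult of_real_diff of_real_add of_real_power of_real_1 of_real_of_nat_eq)
  moreover have "poly Q z \<noteq> 0"
    unfolding Qz of_real_eq_0_iff using cos_quadratic_pos[OF \<open>\<bar>c\<bar> < 1\<close>, of x] by linarith
  ultimately show ?thesis using assms(2) by (simp add: z_def)
qed

definition numerator_profile :: "real \<Rightarrow> real" where
  "numerator_profile b = (b\<^sup>2 + 2 * b + 4 * pi\<^sup>2) * exp (- b) - 2 * b"

text \<open>The derivative of \<^const>\<open>numerator_profile\<close>.\<close>

definition numerator_profile_slope :: "real \<Rightarrow> real" where
  "numerator_profile_slope b = (2 - b\<^sup>2 - 4 * pi\<^sup>2) * exp (- b) - 2"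

lemma crit_numerator_asymptotics:
  "((\<lambda>n. (real n)\<^sup>2 * crit_numerator n (1 - b / real n - c / (real n)\<^sup>2) - real n * numerator_profile b)
     \<longlongrightarrow> 4 * pi\<^sup>2 * (1 - exp (- b)) - (b ^ 4 / 2 + 2 * pi\<^sup>2 * b\<^sup>2) * exp (- b)
          + numerator_profile_slope b * c) at_top"
  unfolding crit_numerator_def numerator_profile_def numerator_profile_slope_def
  by (real_asymp simp add: algebra_simps power2_eq_square, simp add: field_simps power2_eq_square eval_nat_numeral)

lemma numerator_profile_eq_0_iff:
  "numerator_profile b = 0 \<longleftrightarrow> 4 * pi\<^sup>2 + 2 * b + b\<^sup>2 - 2 * b * exp b = 0"
proof -
  have "numerator_profile b = exp (- b) * (4 * pi\<^sup>2 + 2 * b + b\<^sup>2 - 2 * b * exp b)"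
    by (simp add: numerator_profile_def exp_minus field_simps)
  then show ?thesis by simp
qed

lemma pos_if_numerator_profile_eq_0:
  assumes "numerator_profile b = 0"
  shows "b > 0"
proof (rule ccontr)
  assume "\<not> b > 0"
  then have "b * exp b \<le> 0" by (simp add: mult_nonpos_nonneg)
  moreover have "pi\<^sup>2 > 1" using pi_gt3 by (intro one_less_power) auto
  moreover have "4 * pi\<^sup>2 + 2 * b + b\<^sup>2 = (b + 1)\<^sup>2 + (4 * pi\<^sup>2 - 1)" by (simp add: power2_eq_square algebra_simps)
  ultimately show False
    using assms zero_le_power2[of "b + 1"] unfolding numerator_profile_eq_0_iff by linarith
qed

lemma numerator_profile_slope_neg_if_eq_0:
  assumes "numerator_profile b = 0"
  shows "numerator_profile_slope b < 0"
proof -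
  have "b > 0" using pos_if_numerator_profile_eq_0[OF assms] .
  have "4 * pi\<^sup>2 = 2 * b * exp b - 2 * b - b\<^sup>2" using assms unfolding numerator_profile_eq_0_iff by linarith
  then have "numerator_profile_slope b = (2 + 2 * b) * (exp (- b) - 1)"
    by (simp add: numerator_profile_slope_def exp_minus field_simps power2_eq_square)
  moreover have "exp (- b) < 1" using \<open>b > 0\<close> by simp
  ultimately show ?thesis using \<open>b > 0\<close> by (simp add: mult_pos_neg)
qed

lemma crit_numerator_sign_change:
  assumes "numerator_profile b = 0"
  shows "\<exists>K>0. eventually (\<lambda>n. crit_numerator n (1 - b / real n - K / (real n)\<^sup>2) < 0
                             \<and> crit_numerator n (1 - b / real n + K / (real n)\<^sup>2) > 0) at_top"
proof -
  define L where "L = 4 * pi\<^sup>2 * (1 - exp (- b)) - (b ^ 4 / 2 + 2 * pi\<^sup>2 * b\<^sup>2) * exp (- b)"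
  define D where "D = numerator_profile_slope b"
  define K where "K = (\<bar>L\<bar> + 1) / - D"
  have "D < 0" unfolding D_def using numerator_profile_slope_neg_if_eq_0[OF assms] .
  then have "K > 0" "D * K = - (\<bar>L\<bar> + 1)" by (simp_all add: K_def field_simps)
  have lim: "((\<lambda>n. (real n)\<^sup>2 * crit_numerator n (1 - b / real n - c / (real n)\<^sup>2)) \<longlongrightarrow> L + D * c) at_top" for c
    using crit_numerator_asymptotics[of b c] by (simp add: assms L_def D_def)
  have "L + D * K < 0" "0 < L + D * - K" using \<open>D * K = _\<close> by linarith+
  then have "eventually (\<lambda>n. (real n)\<^sup>2 * crit_numerator n (1 - b / real n - K / (real n)\<^sup>2) < 0
                      \<and> (real n)\<^sup>2 * crit_numerator n (1 - b / real n + K / (real n)\<^sup>2) > 0) at_top"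
    using order_tendstoD(2)[OF lim[of K]] order_tendstoD(1)[OF lim[of "- K"]]
    by (intro eventually_conj) auto
  then show ?thesis
    using \<open>K > 0\<close> by (auto elim!: eventually_mono simp: mult_less_0_iff zero_less_mult_iff)
qed

theorem proposition3p1:
  fixes b0 :: real
  assumes "4 * pi\<^sup>2 + 2 * b0 + b0\<^sup>2 - 2 * b0 * exp b0 = 0"
  shows "\<exists>C>0. \<exists>n0::nat. \<forall>n\<ge>n0. n \<ge> 3 \<longrightarrow>
           (\<exists>z::complex. poly (pderiv (fpoly n)) z = 0 \<and>
              cmod (z - complex_of_real (1 - b0 / real n)) \<le> C / (real n)\<^sup>2)"
proof -
  have "numerator_profile b0 = 0" using assms by (simp add: numerator_profile_eq_0_iff)
  from crit_numerator_sign_change[OF this] obtain K where "K > 0" and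
    "eventually (\<lambda>n. crit_numerator n (1 - b0 / real n - K / (real n)\<^sup>2) < 0
                    \<and> crit_numerator n (1 - b0 / real n + K / (real n)\<^sup>2) > 0) at_top"
    by blast
  then obtain n0 where sign_change: "\<And>n. n \<ge> n0 \<Longrightarrow>
      crit_numerator n (1 - b0 / real n - K / (real n)\<^sup>2) < 0 \<and>
      crit_numerator n (1 - b0 / real n + K / (real n)\<^sup>2) > 0"
    unfolding eventually_at_top_linorder by blast
  show ?thesis
  proof (intro exI[of _ K] conjI \<open>K > 0\<close> exI[of _ n0] allI impI)
    fix n :: nat
    assume "n \<ge> n0" "n \<ge> 3"
    let ?x0 = "1 - b0 / real n" and ?r = "K / (real n)\<^sup>2"
    have "?x0 - ?r \<le> ?x0 + ?r" using \<open>K > 0\<close> by simp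
    moreover have "continuous_on {?x0 - ?r..?x0 + ?r} (crit_numerator n)"
      unfolding crit_numerator_def by (intro continuous_intros)
    ultimately obtain x where "?x0 - ?r \<le> x" "x \<le> ?x0 + ?r" "crit_numerator n x = 0"
      using IVT'[of "crit_numerator n" "?x0 - ?r" 0 "?x0 + ?r"] sign_change[OF \<open>n \<ge> n0\<close>] by auto
    moreover have "cmod (complex_of_real x - complex_of_real ?x0) = \<bar>x - ?x0\<bar>"
      by (simp flip: of_real_diff)
    ultimately show "\<exists>z. poly (pderiv (fpoly n)) z = 0 \<and> cmod (z - complex_of_real ?x0) \<le> ?r"
      using poly_pderiv_fpoly_eq_0_if_crit_numerator_eq_0[OF \<open>n \<ge> 3\<close>] by (intro exI[of _ "complex_of_real x"]) auto
  qed
qed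

end
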